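(* Suppose that $A,B\in\mathbb{S}^d$ and $K^\star\in\mathbb{S}^d_{\le1}$ satisfy $t_{\mathrm{mix}}(A)>4\cdot t_{\mathrm{mix}}(C(K^\star))$, where $C(K^\star):=(1-\|K^\star\|_{1\to1})A+BK^\star$. Then $\|K^\star\|_{1\to1}>1/(96\cdot t_{\mathrm{mix}}(C(K^\star)))$.
   Context: $\mathbb{S}^d$ is the set of $d\times d$ column-stochastic matrices, $\mathbb{S}^d_a:=\{aM:M\in\mathbb{S}^d\}$ and $\mathbb{S}^d_{\le1}:=\bigcup_{a\in[0,1]}\mathbb{S}^d_a$. $\|M\|_{1\to1}:=\sup_{\|x\|_1=1}\|Mx\|_1$. For $X\in\mathbb{S}^d$ with unique stationary distribution $\pi$, $D_X(t):=\sup_{p\in\Delta^d}\|X^tp-\pi\|_1$ and $t_{\mathrm{mix}}(X):=\min\{t\in\mathbb{N}:D_X(t)\le1/4\}$; if $X$ has no unique stationary distribution, $t_{\mathrm{mix}}(X):=\infty$. *)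

theory Defs
  imports "HOL-Analysis.Analysis" "HOL-Library.Extended_Nat"
begin

text \<open>d x d real matrices are modelled as real^'n^'n with a finite index type 'n (d = CARD('n)).
  Entry (i,j) is M $ i $ j; a column-stochastic matrix has nonnegative entries and
  every column sums to one.\<close>

definition col_stochastic :: "real^'n::finite^'n \<Rightarrow> bool" where
  "col_stochastic M \<longleftrightarrow> (\<forall>i j. M $ i $ j \<ge> 0) \<and> (\<forall>j. (\<Sum>i\<in>UNIV. M $ i $ j) = 1)"

definition sub_stochastic :: "real^'n::finite^'n \<Rightarrow> bool" where
  "sub_stochastic K \<longleftrightarrow> (\<exists>a M. 0 \<le> a \<and> a \<le> 1 \<and> col_stochastic M \<and> K = a *\<^sub>R M)"

definition l1norm :: "real^'n::finite \<Rightarrow> real" where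
  "l1norm x = (\<Sum>i\<in>UNIV. \<bar>x $ i\<bar>)"

definition norm11 :: "real^'n::finite^'n \<Rightarrow> real" where
  "norm11 M = Sup {l1norm (M *v x) | x. l1norm x = 1}"

definition prob_simplex :: "(real^'n::finite) set" where
  "prob_simplex = {p. (\<forall>i. p $ i \<ge> 0) \<and> (\<Sum>i\<in>UNIV. p $ i) = 1}"

definition stationary :: "real^'n::finite^'n \<Rightarrow> real^'n \<Rightarrow> bool" where
  "stationary X \<pi> \<longleftrightarrow> \<pi> \<in> prob_simplex \<and> X *v \<pi> = \<pi>"

definition dist_tv :: "real^'n::finite^'n \<Rightarrow> nat \<Rightarrow> real" where
  "dist_tv X t = (SUP p\<in>prob_simplex. l1norm (((\<lambda>v. X *v v) ^^ t) p - (THE \<pi>. stationary X \<pi>)))"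

definition t_mix :: "real^'n::finite^'n \<Rightarrow> enat" where
  "t_mix X = (if \<exists>!\<pi>. stationary X \<pi>
     then (if \<exists>t. dist_tv X t \<le> 1/4 then enat (LEAST t. dist_tv X t \<le> 1/4) else \<infinity>)
     else \<infinity>)"

end

theory Submission
  imports Defs
begin

(* Write a = ||K|| and K = a M with M stochastic, so that C = C(K) = (1 - a) A + a B M and
   ||A w - C w||_1 <= 2 a ||w||_1. With T = t_mix(C), telescoping gives
   ||A^T w - C^T w||_1 <= 2 a T ||w||_1 for the T-th powers. If a <= 1/(96 T), every column
   of A^T is therefore within 1/4 + 1/48 = 13/48 of the stationary distribution of C, so A^T
   contracts zero-sum vectors by the factor 13/48. This makes the stationary distribution of A
   unique and gives D_A(2T) <= 2 (13/48)^2 < 1/4, i.e. t_mix(A) <= 2T <= 4T, contradicting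
   the hypothesis. *)

lemma linear_funpow:
  fixes f :: "'a::real_vector \<Rightarrow> 'a"
  assumes "linear f"
  shows "linear (f ^^ n)"
proof (induction n)
  case 0
  show ?case unfolding funpow.simps(1) by (rule linear_id)
next
  case (Suc n)
  show ?case using linear_compose[OF Suc assms] by (simp add: o_def)
qed

lemma funpow_fixpoint: "f x = x \<Longrightarrow> (f ^^ n) x = x"
  by (induction n) simp_all

definition entry_sum :: "real^'n::finite \<Rightarrow> real" where
  "entry_sum x = (\<Sum>i\<in>UNIV. x $ i)"

lemma l1norm_nonneg: "l1norm x \<ge> 0"
  unfolding l1norm_def by (simp add: sum_nonneg)

lemma l1norm_add_le: "l1norm (x + y) \<le> l1norm x + l1norm y"
  unfolding l1norm_def by (simp add: sum.distrib[symmetric] sum_mono abs_triangle_ineq)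

lemma l1norm_diff_le: "l1norm (x - y) \<le> l1norm x + l1norm y"
  unfolding l1norm_def by (simp add: sum.distrib[symmetric] sum_mono abs_triangle_ineq4)

lemma l1norm_scaleR: "l1norm (c *\<^sub>R x) = \<bar>c\<bar> * l1norm x"
  unfolding l1norm_def by (simp add: abs_mult sum_distrib_left)

lemma l1norm_sum_le: "l1norm (\<Sum>j\<in>S. f j) \<le> (\<Sum>j\<in>S. l1norm (f j))"
proof -
  have "l1norm (\<Sum>j\<in>S. f j) = (\<Sum>i\<in>UNIV. \<bar>\<Sum>j\<in>S. f j $ i\<bar>)"
    unfolding l1norm_def by simp
  also have "\<dots> \<le> (\<Sum>i\<in>UNIV. \<Sum>j\<in>S. \<bar>f j $ i\<bar>)"
    by (intro sum_mono sum_abs)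
  also have "\<dots> = (\<Sum>j\<in>S. l1norm (f j))"
    unfolding l1norm_def by (rule sum.swap)
  finally show ?thesis .
qed

lemma l1norm_eq_0_iff: "l1norm x = 0 \<longleftrightarrow> x = 0"
  unfolding l1norm_def by (subst sum_nonneg_eq_0_iff) (auto simp: vec_eq_iff)

lemma l1norm_prob_simplex: "p \<in> prob_simplex \<Longrightarrow> l1norm p = 1"
  unfolding prob_simplex_def l1norm_def by simp

lemma axis_in_prob_simplex: "axis j 1 \<in> prob_simplex"
  unfolding prob_simplex_def by (simp add: axis_def)

lemma prob_simplex_nonempty: "prob_simplex \<noteq> {}"
  using axis_in_prob_simplex by blast

lemma entry_sum_prob_simplex_diff:
  "p \<in> prob_simplex \<Longrightarrow> q \<in> prob_simplex \<Longrightarrow> entry_sum (p - q) = 0"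
  unfolding prob_simplex_def entry_sum_def by (simp add: sum_subtractf)

lemma l1norm_prob_simplex_diff_le:
  "p \<in> prob_simplex \<Longrightarrow> q \<in> prob_simplex \<Longrightarrow> l1norm (p - q) \<le> 2"
  using l1norm_diff_le[of p q] by (simp add: l1norm_prob_simplex)

lemma compact_prob_simplex: "compact (prob_simplex :: (real^'n::finite) set)"
  unfolding compact_eq_bounded_closed
proof
  show "bounded (prob_simplex :: (real^'n) set)"
    unfolding bounded_iff by (metis norm_le_l1_cart l1norm_prob_simplex l1norm_def)
  have "prob_simplex = (\<Inter>i. {p::real^'n. p $ i \<ge> 0}) \<inter> {p. (\<Sum>i\<in>UNIV. p $ i) = 1}"
    unfolding prob_simplex_def by auto
  also have "closed \<dots>"
    by (intro closed_Int closed_INT ballI closed_Collect_le closed_Collect_eq continuous_intros)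
  finally show "closed (prob_simplex :: (real^'n) set)" .
qed

lemma convex_prob_simplex: "convex prob_simplex"
  unfolding convex_def prob_simplex_def
  by (auto simp: sum.distrib sum_distrib_left[symmetric])

lemma col_stochastic_l1norm_le:
  assumes "col_stochastic X"
  shows "l1norm (X *v x) \<le> l1norm x"
proof -
  have "l1norm (X *v x) = (\<Sum>i\<in>UNIV. \<bar>\<Sum>j\<in>UNIV. X$i$j * x$j\<bar>)"
    unfolding l1norm_def by (simp add: matrix_vector_mult_def)
  also have "\<dots> \<le> (\<Sum>i\<in>UNIV. \<Sum>j\<in>UNIV. X$i$j * \<bar>x$j\<bar>)"
    using assms unfolding col_stochastic_def
    by (intro sum_mono order.trans[OF sum_abs]) (simp add: abs_mult)
  also have "\<dots> = (\<Sum>j\<in>UNIV. (\<Sum>i\<in>UNIV. X$i$j) * \<bar>x$j\<bar>)"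
    by (subst sum.swap) (simp add: sum_distrib_right)
  also have "\<dots> = l1norm x"
    using assms unfolding col_stochastic_def l1norm_def by simp
  finally show ?thesis .
qed

lemma l1norm_col_stochastic_diff_le:
  assumes "col_stochastic X" "col_stochastic Y"
  shows "l1norm (X *v w - Y *v w) \<le> 2 * l1norm w"
  using l1norm_diff_le[of "X *v w" "Y *v w"] col_stochastic_l1norm_le[OF assms(1), of w]
    col_stochastic_l1norm_le[OF assms(2), of w]
  by linarith

lemma col_stochastic_entry_sum:
  assumes "col_stochastic X"
  shows "entry_sum (X *v x) = entry_sum x"
proof -
  have "entry_sum (X *v x) = (\<Sum>j\<in>UNIV. (\<Sum>i\<in>UNIV. X$i$j) * x$j)"
    unfolding entry_sum_def matrix_vector_mult_def by (simp add: sum_distrib_right, rule sum.swap)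
  also have "\<dots> = entry_sum x"
    using assms unfolding col_stochastic_def entry_sum_def by simp
  finally show ?thesis .
qed

lemma col_stochastic_prob_simplex:
  assumes "col_stochastic X" "p \<in> prob_simplex"
  shows "X *v p \<in> prob_simplex"
proof -
  have "(X *v p) $ i \<ge> 0" for i
    using assms unfolding col_stochastic_def prob_simplex_def
    by (simp add: matrix_vector_mult_def sum_nonneg)
  with col_stochastic_entry_sum[OF assms(1), of p] assms(2) show ?thesis
    unfolding prob_simplex_def entry_sum_def by auto
qed

lemma col_stochastic_funpow_entry_sum:
  "col_stochastic X \<Longrightarrow> entry_sum (((*v) X ^^ t) x) = entry_sum x"
  by (induction t) (auto simp: col_stochastic_entry_sum)

lemma col_stochastic_funpow_prob_simplex:
  "col_stochastic X \<Longrightarrow> p \<in> prob_simplex \<Longrightarrow> ((*v) X ^^ t) p \<in> prob_simplex"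
  by (induction t) (auto simp: col_stochastic_prob_simplex)

lemma col_stochastic_matrix_mult:
  assumes "col_stochastic X" "col_stochastic Y"
  shows "col_stochastic (X ** Y)"
proof -
  have "(\<Sum>i\<in>UNIV. (X ** Y) $ i $ j) = (\<Sum>k\<in>UNIV. (\<Sum>i\<in>UNIV. X$i$k) * Y$k$j)" for j
    unfolding matrix_matrix_mult_def by (simp add: sum_distrib_right, rule sum.swap)
  with assms show ?thesis
    unfolding col_stochastic_def by (simp add: matrix_matrix_mult_def sum_nonneg)
qed

lemma col_stochastic_convex_comb:
  assumes "col_stochastic X" "col_stochastic Y" "0 \<le> a" "a \<le> 1"
  shows "col_stochastic ((1 - a) *\<^sub>R X + a *\<^sub>R Y)"
  using assms unfolding col_stochastic_def
  by (simp add: sum.distrib sum_distrib_left[symmetric])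

lemma norm11_scaleR_col_stochastic:
  assumes "col_stochastic M" "0 \<le> a"
  shows "norm11 (a *\<^sub>R M) = a"
  unfolding norm11_def
proof (rule cSup_eq_maximum)
  let ?e = "axis undefined 1 :: real^'n"
  have "l1norm ((a *\<^sub>R M) *v ?e) = a"
    using col_stochastic_prob_simplex[OF assms(1) axis_in_prob_simplex] assms(2)
    by (simp add: scaleR_matrix_vector_assoc[symmetric] l1norm_scaleR l1norm_prob_simplex)
  then show "a \<in> {l1norm ((a *\<^sub>R M) *v x) |x. l1norm x = 1}"
    using l1norm_prob_simplex[OF axis_in_prob_simplex] by (intro CollectI exI[of _ ?e]) simp
next
  fix y assume "y \<in> {l1norm ((a *\<^sub>R M) *v x) |x. l1norm x = 1}"
  then obtain x where "y = l1norm ((a *\<^sub>R M) *v x)" "l1norm x = 1" by blast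
  then show "y \<le> a"
    using col_stochastic_l1norm_le[OF assms(1), of x] assms(2)
    by (simp add: scaleR_matrix_vector_assoc[symmetric] l1norm_scaleR mult_left_le)
qed

lemma stationary_exists:
  assumes "col_stochastic X"
  shows "\<exists>p. stationary X p"
proof -
  have "continuous_on prob_simplex ((*v) X)"
    by (intro linear_continuous_on) simp
  moreover have "(*v) X \<in> prob_simplex \<rightarrow> prob_simplex"
    using col_stochastic_prob_simplex[OF assms] by blast
  ultimately obtain p where "p \<in> prob_simplex" "X *v p = p"
    using brouwer[OF compact_prob_simplex convex_prob_simplex prob_simplex_nonempty] by blast
  then show ?thesis
    unfolding stationary_def by blast
qed

lemma l1norm_funpow_le:
  fixes F :: "real^'n::finite \<Rightarrow> real^'n"
  assumes "\<And>u. l1norm (F u) \<le> l1norm u"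
  shows "l1norm ((F ^^ t) x) \<le> l1norm x"
proof (induction t)
  case (Suc t)
  show ?case using order.trans[OF assms Suc] by simp
qed simp

lemma l1norm_funpow_diff_le:
  fixes F G :: "real^'n::finite \<Rightarrow> real^'n"
  assumes "linear F" "\<And>u. l1norm (F u) \<le> l1norm u" "\<And>u. l1norm (G u) \<le> l1norm u"
    and "\<And>w. l1norm (F w - G w) \<le> e * l1norm w" "0 \<le> e"
  shows "l1norm ((F ^^ t) x - (G ^^ t) x) \<le> real t * e * l1norm x"
proof (induction t)
  case 0
  show ?case by (simp add: l1norm_def)
next
  case (Suc t)
  let ?y = "(G ^^ t) x"
  have "(F ^^ Suc t) x - (G ^^ Suc t) x = F ((F ^^ t) x - ?y) + (F ?y - G ?y)"
    by (simp add: linear_diff[OF assms(1)])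
  then have "l1norm ((F ^^ Suc t) x - (G ^^ Suc t) x)
      \<le> l1norm (F ((F ^^ t) x - ?y)) + l1norm (F ?y - G ?y)"
    by (simp only: l1norm_add_le)
  also have "\<dots> \<le> real t * e * l1norm x + e * l1norm ?y"
    using Suc assms(2)[of "(F ^^ t) x - ?y"] assms(4)[of ?y] by linarith
  also have "\<dots> \<le> real t * e * l1norm x + e * l1norm x"
    using l1norm_funpow_le[of G, OF assms(3)] assms(5) by (simp add: mult_left_mono)
  finally show ?case by (simp add: algebra_simps)
qed

lemma l1norm_zero_sum_le:
  assumes "linear H" "\<And>j. l1norm (H (axis j 1) - q) \<le> c" "entry_sum x = 0"
  shows "l1norm (H x) \<le> c * l1norm x"
proof -
  have "H x = H (\<Sum>j\<in>UNIV. x $ j *\<^sub>R axis j 1)"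
    using basis_expansion[of x] by (simp add: scalar_mult_eq_scaleR)
  also have "\<dots> = (\<Sum>j\<in>UNIV. x $ j *\<^sub>R (H (axis j 1) - q)) + entry_sum x *\<^sub>R q"
    by (simp add: linear_sum[OF assms(1)] linear_cmul[OF assms(1)] entry_sum_def
        scaleR_diff_right sum_subtractf scaleR_sum_left)
  finally have "l1norm (H x) \<le> (\<Sum>j\<in>UNIV. l1norm (x $ j *\<^sub>R (H (axis j 1) - q)))"
    using assms(3) l1norm_sum_le by (simp del: sum_component)
  also have "\<dots> \<le> (\<Sum>j\<in>UNIV. \<bar>x $ j\<bar> * c)"
    by (intro sum_mono) (simp add: l1norm_scaleR assms(2) mult_left_mono)
  finally show ?thesis by (simp add: l1norm_def sum_distrib_left mult.commute)
qed

lemma t_mix_eq_enatD: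
  assumes "t_mix X = enat T"
  shows "\<exists>!\<pi>. stationary X \<pi>" "dist_tv X T \<le> 1/4"
proof -
  have ex: "\<exists>t. dist_tv X t \<le> 1/4" and uniq: "\<exists>!\<pi>. stationary X \<pi>"
    using assms unfolding t_mix_def by (auto split: if_splits)
  then have "T = (LEAST t. dist_tv X t \<le> 1/4)"
    using assms unfolding t_mix_def by simp
  with LeastI_ex[OF ex] uniq show "\<exists>!\<pi>. stationary X \<pi>" "dist_tv X T \<le> 1/4"
    by simp_all
qed

lemma t_mix_le_enat:
  assumes "\<exists>!\<pi>. stationary X \<pi>" "dist_tv X t \<le> 1/4"
  shows "t_mix X \<le> enat t"
  using assms Least_le[of "\<lambda>t. dist_tv X t \<le> 1/4" t] unfolding t_mix_def by auto

lemma l1norm_funpow_le_dist_tv: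
  assumes "col_stochastic X" "stationary X \<pi>" "\<exists>!\<pi>. stationary X \<pi>" "p \<in> prob_simplex"
  shows "l1norm (((*v) X ^^ t) p - \<pi>) \<le> dist_tv X t"
proof -
  have "l1norm (((*v) X ^^ t) q - \<pi>) \<le> 2" if "q \<in> prob_simplex" for q
    using assms(1,2) that unfolding stationary_def
    by (simp add: l1norm_prob_simplex_diff_le col_stochastic_funpow_prob_simplex)
  then have "bdd_above ((\<lambda>q. l1norm (((*v) X ^^ t) q - \<pi>)) ` prob_simplex)"
    by (rule bdd_aboveI2)
  then show ?thesis
    unfolding dist_tv_def the1_equality[OF assms(3,2)] by (rule cSUP_upper[OF assms(4)])
qed

lemma stationary_unique_if_funpow_contracts:
  fixes X :: "real^'n::finite^'n"
  assumes contr: "\<And>x. entry_sum x = 0 \<Longrightarrow> l1norm (((*v) X ^^ T) x) \<le> c * l1norm x"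
    and "c < 1" and \<pi>: "stationary X \<pi>" and \<sigma>: "stationary X \<sigma>"
  shows "\<sigma> = \<pi>"
proof -
  have "((*v) X ^^ T) (\<sigma> - \<pi>) = \<sigma> - \<pi>"
    using \<sigma> \<pi> unfolding stationary_def
    by (simp add: linear_diff[OF linear_funpow] funpow_fixpoint)
  moreover have "entry_sum (\<sigma> - \<pi>) = 0"
    using \<sigma> \<pi> unfolding stationary_def by (simp add: entry_sum_prob_simplex_diff)
  ultimately have "l1norm (\<sigma> - \<pi>) \<le> c * l1norm (\<sigma> - \<pi>)"
    using contr by metis
  with \<open>c < 1\<close> l1norm_nonneg[of "\<sigma> - \<pi>"] have "l1norm (\<sigma> - \<pi>) = 0"
    using mult_le_cancel_right1[of "l1norm (\<sigma> - \<pi>)" c] by linarith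
  then show "\<sigma> = \<pi>" by (simp add: l1norm_eq_0_iff)
qed

lemma dist_tv_double_le_if_funpow_contracts:
  fixes X :: "real^'n::finite^'n"
  assumes X: "col_stochastic X"
    and contr: "\<And>x. entry_sum x = 0 \<Longrightarrow> l1norm (((*v) X ^^ T) x) \<le> c * l1norm x"
    and c: "0 \<le> c" and \<pi>: "stationary X \<pi>" and uniq: "\<exists>!\<pi>. stationary X \<pi>"
  shows "dist_tv X (2 * T) \<le> 2 * c\<^sup>2"
  unfolding dist_tv_def the1_equality[OF uniq \<pi>]
proof (rule cSUP_least[OF prob_simplex_nonempty])
  let ?F = "(*v) X ^^ T"
  fix p :: "real^'n" assume p: "p \<in> prob_simplex"
  have zero_sum: "entry_sum (p - \<pi>) = 0"
    using p \<pi> unfolding stationary_def by (simp add: entry_sum_prob_simplex_diff)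
  have "l1norm (((*v) X ^^ (2 * T)) p - \<pi>) = l1norm (?F (?F (p - \<pi>)))"
    using \<pi> unfolding stationary_def
    by (simp add: mult_2 funpow_add linear_diff[OF linear_funpow] funpow_fixpoint)
  also have "\<dots> \<le> c * l1norm (?F (p - \<pi>))"
    using X zero_sum by (intro contr) (simp add: col_stochastic_funpow_entry_sum)
  also have "\<dots> \<le> c * (c * l1norm (p - \<pi>))"
    using contr[OF zero_sum] c by (rule mult_left_mono)
  also have "\<dots> \<le> c * (c * 2)"
    using p \<pi> c unfolding stationary_def
    by (intro mult_left_mono l1norm_prob_simplex_diff_le) auto
  finally show "l1norm (((\<lambda>v. X *v v) ^^ (2 * T)) p - \<pi>) \<le> 2 * c\<^sup>2"
    by (simp add: power2_eq_square)
qed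

lemma t_mix_le_double_if_columns_close:
  fixes X :: "real^'n::finite^'n"
  assumes X: "col_stochastic X"
    and close: "\<And>j. l1norm (((*v) X ^^ T) (axis j 1) - q) \<le> c" and c: "8 * c\<^sup>2 \<le> 1"
  shows "t_mix X \<le> enat (2 * T)"
proof -
  have contr: "l1norm (((*v) X ^^ T) x) \<le> c * l1norm x" if "entry_sum x = 0" for x
    using l1norm_zero_sum_le[OF linear_funpow close that] by simp
  have c_nonneg: "0 \<le> c"
    using order.trans[OF l1norm_nonneg close] .
  have "c < 1"
  proof (rule ccontr)
    assume "\<not> c < 1"
    then have "1 \<le> c\<^sup>2" by simp
    with c show False by simp
  qed
  obtain \<pi> where \<pi>: "stationary X \<pi>"
    using stationary_exists[OF X] by blast
  have uniq: "\<exists>!\<pi>. stationary X \<pi>"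
    using stationary_unique_if_funpow_contracts[OF contr \<open>c < 1\<close> \<pi>] \<pi> by blast
  have "dist_tv X (2 * T) \<le> 1/4"
    using dist_tv_double_le_if_funpow_contracts[OF X contr c_nonneg \<pi> uniq] c by simp
  with uniq show ?thesis
    by (rule t_mix_le_enat)
qed

lemma t_mix_perturbation:
  assumes X: "col_stochastic X" and Y: "col_stochastic Y"
    and XY: "\<And>w. l1norm (X *v w - Y *v w) \<le> e * l1norm w" "0 \<le> e"
    and T: "t_mix Y = enat T" "real T * e \<le> 1/48"
  shows "t_mix X \<le> enat (2 * T)"
proof -
  obtain \<pi> where \<pi>: "stationary Y \<pi>"
    using stationary_exists[OF Y] by blast
  have "l1norm (((*v) X ^^ T) (axis j 1) - \<pi>) \<le> 13/48" for j
  proof -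
    have "l1norm (((*v) X ^^ T) (axis j 1) - ((*v) Y ^^ T) (axis j 1)) \<le> real T * e * l1norm (axis j 1)"
      by (rule l1norm_funpow_diff_le[OF _ col_stochastic_l1norm_le[OF X] col_stochastic_l1norm_le[OF Y] XY])
        simp
    moreover have "l1norm (((*v) Y ^^ T) (axis j 1) - \<pi>) \<le> 1/4"
      using order.trans[OF
          l1norm_funpow_le_dist_tv[OF Y \<pi> t_mix_eq_enatD(1)[OF T(1)] axis_in_prob_simplex]
          t_mix_eq_enatD(2)[OF T(1)]] .
    ultimately show ?thesis
      using l1norm_add_le[of "((*v) X ^^ T) (axis j 1) - ((*v) Y ^^ T) (axis j 1)"
          "((*v) Y ^^ T) (axis j 1) - \<pi>"] l1norm_prob_simplex[OF axis_in_prob_simplex[of j]] T(2)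
      by simp
  qed
  then show ?thesis
    by (rule t_mix_le_double_if_columns_close[OF X]) (simp add: power2_eq_square)
qed

definition closed_loop ::
    "real^'n::finite^'n \<Rightarrow> real^'n^'n \<Rightarrow> real^'n^'n \<Rightarrow> real^'n^'n" where
  "closed_loop A B K = (1 - norm11 K) *\<^sub>R A + B ** K"

lemma closed_loop_sub_stochastic:
  assumes "sub_stochastic K"
  obtains M where "col_stochastic M" "0 \<le> norm11 K" "norm11 K \<le> 1"
    "closed_loop A B K = (1 - norm11 K) *\<^sub>R A + norm11 K *\<^sub>R (B ** M)"
proof -
  obtain a M where a: "0 \<le> a" "a \<le> 1" and M: "col_stochastic M" and K: "K = a *\<^sub>R M"
    using assms unfolding sub_stochastic_def by blast
  have "norm11 K = a"
    using norm11_scaleR_col_stochastic[OF M a(1)] K by simp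
  with a M K show thesis
    by (intro that[of M]) (simp_all add: closed_loop_def matrix_scalar_ac scalar_matrix_assoc)
qed

lemma col_stochastic_closed_loop:
  assumes "col_stochastic A" "col_stochastic B" "sub_stochastic K"
  shows "col_stochastic (closed_loop A B K)"
proof -
  obtain M where "col_stochastic M" "0 \<le> norm11 K" "norm11 K \<le> 1"
    and C: "closed_loop A B K = (1 - norm11 K) *\<^sub>R A + norm11 K *\<^sub>R (B ** M)"
    using closed_loop_sub_stochastic[OF assms(3)] .
  with assms(1,2) show ?thesis
    unfolding C by (intro col_stochastic_convex_comb col_stochastic_matrix_mult)
qed

lemma l1norm_closed_loop_diff_le:
  assumes "col_stochastic A" "col_stochastic B" "sub_stochastic K"
  shows "l1norm (A *v w - closed_loop A B K *v w) \<le> 2 * norm11 K * l1norm w"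
proof -
  obtain M where M: "col_stochastic M" and a: "0 \<le> norm11 K"
    and C: "closed_loop A B K = (1 - norm11 K) *\<^sub>R A + norm11 K *\<^sub>R (B ** M)"
    using closed_loop_sub_stochastic[OF assms(3)] .
  have "A *v w - closed_loop A B K *v w = norm11 K *\<^sub>R (A *v w - (B ** M) *v w)"
    unfolding C by (simp add: algebra_simps matrix_vector_mult_add_rdistrib
        scaleR_matrix_vector_assoc[symmetric])
  then have "l1norm (A *v w - closed_loop A B K *v w) = norm11 K * l1norm (A *v w - (B ** M) *v w)"
    using a by (simp add: l1norm_scaleR)
  also have "\<dots> \<le> norm11 K * (2 * l1norm w)"
    using l1norm_col_stochastic_diff_le[OF assms(1) col_stochastic_matrix_mult[OF assms(2) M]] a
    by (rule mult_left_mono)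
  finally show ?thesis by simp
qed

theorem lemma6:
  fixes A B K :: "real^'n::finite^'n"
  assumes "col_stochastic A" and "col_stochastic B" and "sub_stochastic K"
    and "t_mix A > 4 * t_mix ((1 - norm11 K) *\<^sub>R A + B ** K)"
  shows "norm11 K > 1 / (96 * real (the_enat (t_mix ((1 - norm11 K) *\<^sub>R A + B ** K))))"
proof -
  let ?C = "closed_loop A B K"
  have mix: "t_mix A > 4 * t_mix ?C"
    using assms(4) by (simp add: closed_loop_def)
  then obtain T where T: "t_mix ?C = enat T"
    by (cases "t_mix ?C") (auto simp: numeral_eq_enat)
  show ?thesis
  proof (rule ccontr)
    assume "\<not> ?thesis"
    then have "norm11 K \<le> 1 / (96 * real T)"
      using T by (simp add: closed_loop_def)
    then have "real T * (2 * norm11 K) \<le> 1/48"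
      by (cases "T = 0") (auto simp: field_simps)
    moreover have "0 \<le> norm11 K"
      by (rule closed_loop_sub_stochastic[OF assms(3)])
    ultimately have "t_mix A \<le> enat (2 * T)"
      using t_mix_perturbation[OF assms(1) col_stochastic_closed_loop[OF assms(1-3)]
          l1norm_closed_loop_diff_le[OF assms(1-3)] _ T] by simp
    also have "\<dots> \<le> 4 * t_mix ?C"
      unfolding T by (simp add: numeral_eq_enat)
    finally show False
      using mix by simp
  qed
qed

end
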